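(* For homogeneous $v_1,\dots,v_n\in V$, writing $Z=Z_V^{(g)}(v_1,y_1;\dots;v_n,y_n)$, \begin{enumerate} \item $\big(\mathcal L_{-1}-\sum_{k=1}^n\partial_{y_k}\big)Z=0$; \item $\big(\mathcal L_0-\sum_{k=1}^ny_k\partial_{y_k}-\sum_{k=1}^n\mathrm{wt}(v_k)\big)Z=0$; \item $\big(\mathcal L_1-\sum_{k=1}^ny_k^2\partial_{y_k}-\sum_{k=1}^n2y_k\,\mathrm{wt}(v_k)\big)Z=\sum_{k=1}^nZ_V^{(g)}(v_1,y_1;\dots;L(1)v_k,y_k;\dots;v_n,y_n)$, \end{enumerate} where $\mathcal L_{-1}=-\sum_{a\in\mathcal I}\partial_{w_a}$, $\mathcal L_0=-\sum_{a\in\mathcal I}w_a\partial_{w_a}-2\sum_{a\in\mathcal I_+}\rho_a\partial_{\rho_a}$, $\mathcal L_1=-\sum_{a\in\mathcal I}(w_a^2+\rho_{|a|})\partial_{w_a}-2\sum_{a\in\mathcal I_+}(w_a+w_{-a})\rho_a\partial_{\rho_a}$.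
   Context: $V=\bigoplus_{n\ge0}V_n$ is a simple, self-dual vertex operator algebra of strong CFT type ($V_0=\mathbb C\mathbb1$, $L(1)V_1=0$) with Virasoro modes $L(n)$ and $\mathrm{wt}(v)=n$ for $v\in V_n$. $\langle\cdot,\cdot\rangle_1$ is the unique invariant bilinear form with $\langle\mathbb1,\mathbb1\rangle_1=1$. Genus zero $n$-point function: $Z^{(0)}(v_1,y_1;\dots;v_n,y_n)=\langle\mathbb1,Y(v_1,y_1)\cdots Y(v_n,y_n)\mathbb1\rangle_1$. Let $g\ge1$, $\mathcal I=\{\pm1,\dots,\pm g\}$, $\mathcal I_+=\{1,\dots,g\}$, formal variables $w_a$ ($a\in\mathcal I$), $\rho_a$ ($a\in\mathcal I_+$). For each $a\in\mathcal I_+$ let $b_a$ run over a homogeneous basis of $V$, $\bar b_a$ the dual basis for $\langle\cdot,\cdot\rangle_1$, and $b_{-a}=\rho_a^{\mathrm{wt}(b_a)}\bar b_a$. The genus $g$ formal $n$-point function is $Z_V^{(g)}(v_1,y_1;\dots;v_n,y_n)=\sum_{b_1,\dots,b_g}Z^{(0)}(v_1,y_1;\dots;v_n,y_n;b_{-1},w_{-1};b_1,w_1;\dots;b_{-g},w_{-g};b_g,w_g)$ (formal power series in the $\rho_a$). *)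

theory Defs
  imports Complex_Main
begin

text \<open>
A vertex operator algebra is given by a complex vector space 'v (scalar multiplication
scale), the modes  Y u m x = u(m) x  (so Y(u,z) = sum over m of u(m) z^(-m-1)),
the vacuum vac, the conformal vector om and the central charge c.
\<close>

definition Lv :: "('v \<Rightarrow> int \<Rightarrow> 'v \<Rightarrow> 'v) \<Rightarrow> 'v \<Rightarrow> int \<Rightarrow> 'v \<Rightarrow> 'v" where
  "Lv Y om n = Y om (n + 1)"

definition Vgr :: "(complex \<Rightarrow> 'v \<Rightarrow> 'v) \<Rightarrow> ('v \<Rightarrow> int \<Rightarrow> 'v \<Rightarrow> 'v) \<Rightarrow> 'v \<Rightarrow> nat \<Rightarrow> 'v set" where
  "Vgr scale Y om n = {x. Lv Y om 0 x = scale (of_nat n) x}"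

definition is_VOA ::
  "(complex \<Rightarrow> 'v::ab_group_add \<Rightarrow> 'v) \<Rightarrow> ('v \<Rightarrow> int \<Rightarrow> 'v \<Rightarrow> 'v) \<Rightarrow> 'v \<Rightarrow> 'v \<Rightarrow> complex \<Rightarrow> bool" where
  "is_VOA scale Y vac om c \<longleftrightarrow>
     vector_space scale
   \<comment> \<open>bilinearity of the modes\<close>
   \<and> (\<forall>u m. Vector_Spaces.linear scale scale (Y u m))
   \<and> (\<forall>u u' m x. Y (u + u') m x = Y u m x + Y u' m x)
   \<and> (\<forall>a u m x. Y (scale a u) m x = scale a (Y u m x))
   \<comment> \<open>truncation\<close>
   \<and> (\<forall>u x. \<exists>N. \<forall>m\<ge>N. Y u m x = 0)
   \<comment> \<open>vacuum and creation properties\<close>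
   \<and> (\<forall>m x. Y vac m x = (if m = -1 then x else 0))
   \<and> (\<forall>u m. m \<ge> 0 \<longrightarrow> Y u m vac = 0)
   \<and> (\<forall>u. Y u (-1) vac = u)
   \<comment> \<open>Jacobi (Borcherds) identity, written with finite sums beyond which all terms vanish\<close>
   \<and> (\<forall>u v w p q r N. (\<forall>i\<ge>N. Y u (r + int i) v = 0 \<and> Y v (q + int i) w = 0 \<and> Y u (p + int i) w = 0) \<longrightarrow>
        (\<Sum>i<N. scale (of_int p gchoose i) (Y (Y u (r + int i) v) (p + q - int i) w))
      = (\<Sum>i<N. scale ((-1)^i * (of_int r gchoose i))
              (Y u (p + r - int i) (Y v (q + int i) w)
               - scale ((-1) powi r) (Y v (q + r - int i) (Y u (p + int i) w)))))
   \<comment> \<open>Virasoro relations with central charge c\<close>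
   \<and> (\<forall>m n x. Lv Y om m (Lv Y om n x) - Lv Y om n (Lv Y om m x)
        = scale (of_int (m - n)) (Lv Y om (m + n) x)
          + scale (if m + n = 0 then (of_int (m^3 - m) / 12) * c else 0) x)
   \<comment> \<open>L(-1)-derivative property: Y(L(-1)u,z) = d/dz Y(u,z)\<close>
   \<and> (\<forall>u m x. Y (Lv Y om (-1) u) m x = scale (- of_int m) (Y u (m - 1) x))
   \<comment> \<open>grading by L(0): V is the direct sum of the V_n (n in nat), each finite-dimensional\<close>
   \<and> (\<forall>x. \<exists>F xs. finite F \<and> (\<forall>n\<in>F. xs n \<in> Vgr scale Y om n) \<and> x = (\<Sum>n\<in>F. xs n))
   \<and> (\<forall>n. \<exists>B. finite B \<and> B \<subseteq> Vgr scale Y om n \<and> Vgr scale Y om n \<subseteq> module.span scale B)"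

definition strong_CFT_type :: "(complex \<Rightarrow> 'v::ab_group_add \<Rightarrow> 'v) \<Rightarrow> ('v \<Rightarrow> int \<Rightarrow> 'v \<Rightarrow> 'v) \<Rightarrow> 'v \<Rightarrow> 'v \<Rightarrow> bool" where
  "strong_CFT_type scale Y vac om \<longleftrightarrow>
     Vgr scale Y om 0 = {scale a vac | a. True}
   \<and> (\<forall>x \<in> Vgr scale Y om 1. Lv Y om 1 x = 0)"

definition simple_VOA :: "(complex \<Rightarrow> 'v::ab_group_add \<Rightarrow> 'v) \<Rightarrow> ('v \<Rightarrow> int \<Rightarrow> 'v \<Rightarrow> 'v) \<Rightarrow> bool" where
  "simple_VOA scale Y \<longleftrightarrow>
     (\<forall>I. module.subspace scale I \<and> (\<forall>u m x. x \<in> I \<longrightarrow> Y u m x \<in> I) \<longrightarrow> I = {0} \<or> I = UNIV)"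

definition bilinear_form :: "(complex \<Rightarrow> 'v::ab_group_add \<Rightarrow> 'v) \<Rightarrow> ('v \<Rightarrow> 'v \<Rightarrow> complex) \<Rightarrow> bool" where
  "bilinear_form scale B \<longleftrightarrow>
     (\<forall>x y z. B (x + y) z = B x z + B y z \<and> B z (x + y) = B z x + B z y)
   \<and> (\<forall>a x y. B (scale a x) y = a * B x y \<and> B x (scale a y) = a * B x y)"

text \<open>Invariance: <Y(u,z)a,b> = <a, Y(e^{zL(1)} (-z^{-2})^{L(0)} u, z^{-1}) b>, in modes
for homogeneous u of weight k.\<close>
definition invariant_form ::
  "(complex \<Rightarrow> 'v::ab_group_add \<Rightarrow> 'v) \<Rightarrow> ('v \<Rightarrow> int \<Rightarrow> 'v \<Rightarrow> 'v) \<Rightarrow> 'v \<Rightarrow> ('v \<Rightarrow> 'v \<Rightarrow> complex) \<Rightarrow> bool" where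
  "invariant_form scale Y om B \<longleftrightarrow>
     bilinear_form scale B
   \<and> (\<forall>k u m a b. u \<in> Vgr scale Y om k \<longrightarrow>
        B (Y u m a) b = (-1)^k * (\<Sum>j\<le>k. (1 / fact j) *
            B a (Y ((Lv Y om 1 ^^ j) u) (2 * int k - m - int j - 2) b)))"

text \<open>Self-dual (V isomorphic to its contragredient V'): equivalently, V carries a
nondegenerate invariant bilinear form.\<close>
definition self_dual :: "(complex \<Rightarrow> 'v::ab_group_add \<Rightarrow> 'v) \<Rightarrow> ('v \<Rightarrow> int \<Rightarrow> 'v \<Rightarrow> 'v) \<Rightarrow> 'v \<Rightarrow> bool" where
  "self_dual scale Y om \<longleftrightarrow>
     (\<exists>B. invariant_form scale Y om B \<and> (\<forall>x. x \<noteq> 0 \<longrightarrow> (\<exists>y. B x y \<noteq> 0)))"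

definition hom_dual_bases ::
  "(complex \<Rightarrow> 'v::ab_group_add \<Rightarrow> 'v) \<Rightarrow> ('v \<Rightarrow> int \<Rightarrow> 'v \<Rightarrow> 'v) \<Rightarrow> 'v \<Rightarrow> ('v \<Rightarrow> 'v \<Rightarrow> complex)
     \<Rightarrow> (nat \<Rightarrow> 'v list) \<Rightarrow> (nat \<Rightarrow> 'v list) \<Rightarrow> bool" where
  "hom_dual_bases scale Y om B bas dual \<longleftrightarrow>
     (\<forall>n. distinct (bas n) \<and> set (bas n) \<subseteq> Vgr scale Y om n
        \<and> \<not> module.dependent scale (set (bas n))
        \<and> Vgr scale Y om n \<subseteq> module.span scale (set (bas n))
        \<and> length (dual n) = length (bas n) \<and> set (dual n) \<subseteq> Vgr scale Y om n
        \<and> (\<forall>i<length (bas n). \<forall>j<length (bas n). B (bas n ! i) (dual n ! j) = (if i = j then 1 else 0)))"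

text \<open>Genus zero formal N-point function <vac, Y(u_1,z_1)...Y(u_N,z_N) vac>:
the coefficient of z_1^{e_1}...z_N^{e_N} is <vac, u_1(-e_1-1) ... u_N(-e_N-1) vac>.\<close>
definition Z0 :: "('v \<Rightarrow> int \<Rightarrow> 'v \<Rightarrow> 'v) \<Rightarrow> ('v \<Rightarrow> 'v \<Rightarrow> complex) \<Rightarrow> 'v \<Rightarrow> 'v list \<Rightarrow> int list \<Rightarrow> complex" where
  "Z0 Y B vac us es = B vac (foldr (\<lambda>(u, e) x. Y u (- e - 1) x) (zip us es) vac)"

type_synonym fser = "int list \<Rightarrow> int list \<Rightarrow> nat list \<Rightarrow> complex"

text \<open>Genus g formal n-point function, as a formal series in y_1..y_n (exponent list ey),
w_{-1}, w_1, ..., w_{-g}, w_g (exponent list ew, in this order: position 2i is w_{-(i+1)},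
position 2i+1 is w_{i+1}) and rho_1..rho_g (exponent list ks).  The coefficient of
rho^ks collects the basis vectors b_a of weight ks_a, with b_{-a} = rho_a^{wt b_a} (dual b_a).\<close>
definition Zg :: "('v \<Rightarrow> int \<Rightarrow> 'v \<Rightarrow> 'v) \<Rightarrow> ('v \<Rightarrow> 'v \<Rightarrow> complex) \<Rightarrow> 'v
     \<Rightarrow> (nat \<Rightarrow> 'v list) \<Rightarrow> (nat \<Rightarrow> 'v list) \<Rightarrow> nat \<Rightarrow> 'v list \<Rightarrow> fser" where
  "Zg Y B vac bas dual g vs = (\<lambda>ey ew ks.
     \<Sum>js \<in> listset (map (\<lambda>i. {..<length (bas (ks ! i))}) [0..<g]).
        Z0 Y B vac (vs @ concat (map (\<lambda>i. [dual (ks ! i) ! (js ! i), bas (ks ! i) ! (js ! i)]) [0..<g]))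
                   (ey @ ew))"

definition dy :: "nat \<Rightarrow> fser \<Rightarrow> fser" where
  "dy k F = (\<lambda>ey ew ks. of_int (ey ! k + 1) * F (ey[k := ey ! k + 1]) ew ks)"
definition ydy :: "nat \<Rightarrow> fser \<Rightarrow> fser" where
  "ydy k F = (\<lambda>ey ew ks. of_int (ey ! k) * F ey ew ks)"
definition y2dy :: "nat \<Rightarrow> fser \<Rightarrow> fser" where
  "y2dy k F = (\<lambda>ey ew ks. of_int (ey ! k - 1) * F (ey[k := ey ! k - 1]) ew ks)"
definition ymul :: "nat \<Rightarrow> fser \<Rightarrow> fser" where
  "ymul k F = (\<lambda>ey ew ks. F (ey[k := ey ! k - 1]) ew ks)"
definition dw :: "nat \<Rightarrow> fser \<Rightarrow> fser" where
  "dw j F = (\<lambda>ey ew ks. of_int (ew ! j + 1) * F ey (ew[j := ew ! j + 1]) ks)"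
definition wdw :: "nat \<Rightarrow> fser \<Rightarrow> fser" where
  "wdw j F = (\<lambda>ey ew ks. of_int (ew ! j) * F ey ew ks)"
definition w2dw :: "nat \<Rightarrow> fser \<Rightarrow> fser" where
  "w2dw j F = (\<lambda>ey ew ks. of_int (ew ! j - 1) * F ey (ew[j := ew ! j - 1]) ks)"
definition wmul :: "nat \<Rightarrow> fser \<Rightarrow> fser" where
  "wmul j F = (\<lambda>ey ew ks. F ey (ew[j := ew ! j - 1]) ks)"
definition rhomul :: "nat \<Rightarrow> fser \<Rightarrow> fser" where  \<comment> \<open>multiplication by rho_(i+1)\<close>
  "rhomul i F = (\<lambda>ey ew ks. if ks ! i = 0 then 0 else F ey ew (ks[i := ks ! i - 1]))"
definition rhodrho :: "nat \<Rightarrow> fser \<Rightarrow> fser" where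
  "rhodrho i F = (\<lambda>ey ew ks. of_nat (ks ! i) * F ey ew ks)"

text \<open>The operators L_{-1}, L_0, L_1 (index a in I corresponds to positions j<2g of ew,
|a| to j div 2).\<close>
definition Lm1 :: "nat \<Rightarrow> fser \<Rightarrow> fser" where
  "Lm1 g F = (\<lambda>ey ew ks. - (\<Sum>j<2*g. dw j F ey ew ks))"
definition L0op :: "nat \<Rightarrow> fser \<Rightarrow> fser" where
  "L0op g F = (\<lambda>ey ew ks. - (\<Sum>j<2*g. wdw j F ey ew ks) - 2 * (\<Sum>i<g. rhodrho i F ey ew ks))"
definition L1op :: "nat \<Rightarrow> fser \<Rightarrow> fser" where
  "L1op g F = (\<lambda>ey ew ks.
      - (\<Sum>j<2*g. w2dw j F ey ew ks + rhomul (j div 2) (dw j F) ey ew ks)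
      - 2 * (\<Sum>i<g. wmul (2*i) (rhodrho i F) ey ew ks + wmul (2*i+1) (rhodrho i F) ey ew ks))"

end

theory Submission
  imports Defs
begin

text \<open>The genus \<open>g\<close> function is a finite sum, over dual pairs of homogeneous basis vectors, of
  genus zero correlation functions with the pairs inserted at \<open>w\<^sub>-\<^sub>a, w\<^sub>a\<close>. At genus zero,
  \<open>L(-1), L(0), L(1)\<close> annihilate the vacuum on both sides of the form, and commuting them through a
  product of modes produces, slot by slot, a derivative, a weight and (for \<open>L(1)\<close>) an
  \<open>L(1)\<close>-insertion; this gives three Ward identities. Summed over the bases, the first two are
  items 1 and 2, since the pair at handle \<open>a\<close> has weight equal to the exponent of \<open>\<rho>\<^sub>a\<close>. For
  item 3, an \<open>L(1)\<close> acting on an inserted basis vector of weight \<open>k\<close> is moved, by adjointness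
  of \<open>L(1)\<close> and \<open>L(-1)\<close>, onto its partner of weight \<open>k - 1\<close>, where \<open>L(-1)\<close> is a \<open>w\<close>-derivative;
  the drop of weight by one is the factor \<open>\<rho>\<^sub>a\<close>.\<close>

lemma mem_listset_iff: "xs \<in> listset As \<longleftrightarrow> length xs = length As \<and> (\<forall>i<length As. xs ! i \<in> As ! i)"
proof (induction As arbitrary: xs)
  case Nil
  then show ?case by simp
next
  case (Cons A As)
  then show ?case
    by (cases xs) (auto simp: set_Cons_def nth_Cons split: nat.splits)
qed

lemma sum_lessThan_add_nat: "(\<Sum>i < (n::nat) + m. f i) = (\<Sum>i<n. f i) + (\<Sum>j<m. f (n + j))"
  by (induction m) (auto simp: add.assoc)

lemma sum_lessThan_double: "(\<Sum>j < 2 * (g::nat). f j) = (\<Sum>i<g. f (2 * i) + f (2 * i + 1))"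
  by (induction g) (auto simp: add.assoc)

lemma list_update_overwrite_swap: "a \<noteq> b \<Longrightarrow> xs[a := x, b := y, a := z] = xs[a := z, b := y]"
  by (metis list_update_overwrite list_update_swap)

lemma additive_foldr: "(\<And>p. additive (F p)) \<Longrightarrow> additive (foldr F ps)"
  by (induction ps) (auto simp: additive_def)

lemma foldr_commutator:
  assumes additive: "\<And>p. additive (F p)"
    and commutator: "\<And>i x. i < length ps \<Longrightarrow> A (F (ps ! i) x) = F (ps ! i) (A x) + H i x"
  shows "A (foldr F ps w) = foldr F ps (A w)
           + (\<Sum>i<length ps. foldr F (take i ps) (H i (foldr F (drop (Suc i) ps) w)))"
  using commutator
proof (induction ps arbitrary: H)
  case Nil
  then show ?case by simp
next
  case (Cons p ps)
  have IH: "A (foldr F ps w) = foldr F ps (A w)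
      + (\<Sum>i<length ps. foldr F (take i ps) (H (Suc i) (foldr F (drop (Suc i) ps) w)))"
    using Cons.prems[of "Suc _"] by (intro Cons.IH) simp
  have "A (foldr F (p # ps) w) = F p (A (foldr F ps w)) + H 0 (foldr F ps w)"
    using Cons.prems[of 0] by simp
  also have "\<dots> = foldr F (p # ps) (A w)
      + (\<Sum>i<length (p # ps). foldr F (take i (p # ps)) (H i (foldr F (drop (Suc i) (p # ps)) w)))"
    unfolding IH sum.lessThan_Suc_shift length_Cons
    by (simp add: additive.add[OF additive] additive.sum[OF additive] del: sum.lessThan_Suc)
  finally show ?case .
qed

section \<open>Dual bases\<close>

lemma vector_space_times: "vector_space ((*) :: 'a::field \<Rightarrow> 'a \<Rightarrow> 'a)"
  by unfold_locales (simp_all add: algebra_simps)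

lemma biorthogonal_distinct:
  fixes Bf :: "'b \<Rightarrow> 'c \<Rightarrow> 'a::zero_neq_one"
  assumes "length ys = length xs"
    and biorth: "\<And>i j. i < length xs \<Longrightarrow> j < length xs \<Longrightarrow> Bf (xs ! i) (ys ! j) = (if i = j then 1 else 0)"
  shows "distinct ys"
  unfolding distinct_conv_nth
proof (intro allI impI)
  fix i j assume "i < length ys" "j < length ys" "i \<noteq> j"
  then have "Bf (xs ! i) (ys ! i) \<noteq> Bf (xs ! i) (ys ! j)"
    using assms by simp
  then show "ys ! i \<noteq> ys ! j" by auto
qed

text \<open>Both sides equal \<open>\<Sum>\<^sub>s\<^sub>,\<^sub>t Bf e\<^sub>t (P' f'\<^sub>s) * Q f\<^sub>t e'\<^sub>s\<close>.\<close>

lemma biorthogonal_transfer: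
  fixes Q :: "'b::ab_group_add \<Rightarrow> 'b \<Rightarrow> 'a::field"
  assumes expand: "\<And>t. t < length e \<Longrightarrow> P (e ! t) = (\<Sum>s<length e'. scale (Bf (P (e ! t)) (f' ! s)) (e' ! s))"
    and expand': "\<And>s. s < length e' \<Longrightarrow> P' (f' ! s) = (\<Sum>t<length e. scale (Bf (e ! t) (P' (f' ! s))) (f ! t))"
    and adjoint: "\<And>x y. Bf (P x) y = Bf x (P' y)"
    and linear_left: "\<And>b. module_hom scale (*) (\<lambda>a. Q a b)"
    and linear_right: "\<And>a. module_hom scale (*) (Q a)"
  shows "(\<Sum>t<length e. Q (f ! t) (P (e ! t))) = (\<Sum>s<length e'. Q (P' (f' ! s)) (e' ! s))"
proof -
  have "(\<Sum>t<length e. Q (f ! t) (P (e ! t)))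
      = (\<Sum>t<length e. \<Sum>s<length e'. Bf (e ! t) (P' (f' ! s)) * Q (f ! t) (e' ! s))"
    by (intro sum.cong refl, subst expand)
      (simp_all add: module_hom.sum[OF linear_right] module_hom.scale[OF linear_right] adjoint)
  also have "\<dots> = (\<Sum>s<length e'. \<Sum>t<length e. Bf (e ! t) (P' (f' ! s)) * Q (f ! t) (e' ! s))"
    by (rule sum.swap)
  also have "\<dots> = (\<Sum>s<length e'. Q (P' (f' ! s)) (e' ! s))"
    by (intro sum.cong refl, subst (2) expand')
      (simp_all add: module_hom.sum[OF linear_left] module_hom.scale[OF linear_left])
  finally show ?thesis .
qed

context vector_space
begin

lemma module_hom_iff_additive_homogeneous:
  "module_hom scale (*) f \<longleftrightarrow> (\<forall>x y. f (x + y) = f x + f y) \<and> (\<forall>a x. f (scale a x) = a * f x)"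
  by (auto simp: module_hom_iff module_iff_vector_space vector_space_axioms vector_space_times)

lemma biorthogonal_expansion:
  assumes "distinct xs" and x: "x \<in> span (set xs)"
    and biorth: "\<And>i j. i < length xs \<Longrightarrow> j < length xs \<Longrightarrow> Bf (xs ! i) (ys ! j) = (if i = j then 1 else 0)"
    and linear: "\<And>y. module_hom scale (*) (\<lambda>x. Bf x y)"
  shows "x = (\<Sum>t<length xs. scale (Bf x (ys ! t)) (xs ! t))"
proof -
  obtain u where "x = (\<Sum>v\<in>set xs. scale (u v) v)"
    using x span_finite[of "set xs"] by auto
  then have u: "x = (\<Sum>t<length xs. scale (u (xs ! t)) (xs ! t))"
    using \<open>distinct xs\<close> by (simp add: sum.distinct_set_conv_list sum_list_sum_nth atLeast0LessThan)
  have "Bf x (ys ! s) = u (xs ! s)" if "s < length xs" for s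
  proof -
    have "Bf x (ys ! s) = (\<Sum>t<length xs. u (xs ! t) * (if t = s then 1 else 0))"
      by (subst u) (simp add: module_hom.sum[OF linear] module_hom.scale[OF linear] biorth that)
    also have "\<dots> = u (xs ! s)"
      using that by (simp add: if_distrib cong: if_cong)
    finally show ?thesis .
  qed
  then show ?thesis
    by (subst (1) u) simp
qed

lemma biorthogonal_independent:
  assumes "length ys = length xs"
    and biorth: "\<And>i j. i < length xs \<Longrightarrow> j < length xs \<Longrightarrow> Bf (xs ! i) (ys ! j) = (if i = j then 1 else 0)"
    and linear: "\<And>x. module_hom scale (*) (Bf x)"
  shows "independent (set ys)"
proof (rule independent_if_scalars_zero)
  fix f y assume zero: "(\<Sum>x\<in>set ys. scale (f x) x) = 0" and "y \<in> set ys"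
  then obtain s where s: "s < length ys" "y = ys ! s"
    by (auto simp: in_set_conv_nth)
  have "0 = Bf (xs ! s) (\<Sum>t<length ys. scale (f (ys ! t)) (ys ! t))"
    using zero biorthogonal_distinct[OF assms(1) biorth]
    by (simp add: sum.distinct_set_conv_list sum_list_sum_nth atLeast0LessThan module_hom.zero[OF linear])
  also have "\<dots> = (\<Sum>t<length ys. f (ys ! t) * (if s = t then 1 else 0))"
    using s assms(1)
    by (auto simp: module_hom.sum[OF linear] module_hom.scale[OF linear] biorth intro!: sum.cong)
  also have "\<dots> = f y"
    using s by (simp add: if_distrib cong: if_cong)
  finally show "f y = 0" by simp
qed simp

lemma biorthogonal_span:
  assumes "distinct xs" "S \<subseteq> span (set xs)" "set ys \<subseteq> S" "length ys = length xs"
    and biorth: "\<And>i j. i < length xs \<Longrightarrow> j < length xs \<Longrightarrow> Bf (xs ! i) (ys ! j) = (if i = j then 1 else 0)"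
    and linear: "\<And>x. module_hom scale (*) (Bf x)"
  shows "S \<subseteq> span (set ys)"
proof
  fix x assume "x \<in> S"
  show "x \<in> span (set ys)"
  proof (rule ccontr)
    assume x: "x \<notin> span (set ys)"
    have "independent (insert x (set ys))"
      using independent_insertI[OF x biorthogonal_independent[OF assms(4) biorth linear]] .
    moreover have "insert x (set ys) \<subseteq> span (set xs)"
      using \<open>x \<in> S\<close> assms(2,3) by auto
    ultimately have "card (insert x (set ys)) \<le> card (set xs)"
      using independent_span_bound by simp
    moreover have "x \<notin> set ys"
      using x span_base by blast
    ultimately show False
      using distinct_card[OF biorthogonal_distinct[OF assms(4) biorth]] distinct_card[OF assms(1)] assms(4)
      by simp
  qed
qed

end

section \<open>Vertex operator algebras\<close>

locale vertex_operator_algebra =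
  fixes scale :: "complex \<Rightarrow> 'v::ab_group_add \<Rightarrow> 'v"
    and Y :: "'v \<Rightarrow> int \<Rightarrow> 'v \<Rightarrow> 'v"
    and vac om :: 'v and c :: complex
  assumes voa: "is_VOA scale Y vac om c"
begin

sublocale vector_space scale
  using voa by (simp add: is_VOA_def)

abbreviation L :: "int \<Rightarrow> 'v \<Rightarrow> 'v" where "L n \<equiv> Lv Y om n"

abbreviation V :: "nat \<Rightarrow> 'v set" where "V k \<equiv> Vgr scale Y om k"

lemma linear_mode: "module_hom scale scale (Y u m)"
  using voa by (simp add: is_VOA_def module_hom_iff_linear)

lemmas mode_add = module_hom.add[OF linear_mode]
  and mode_scale = module_hom.scale[OF linear_mode]
  and mode_zero [simp] = module_hom.zero[OF linear_mode]

lemma mode_add_left: "Y (u + u') m x = Y u m x + Y u' m x"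
  using voa by (simp add: is_VOA_def)

lemma mode_scale_left: "Y (scale a u) m x = scale a (Y u m x)"
  using voa by (simp add: is_VOA_def)

lemma mode_zero_left [simp]: "Y 0 m x = 0"
  using mode_scale_left[of 0 0 m x] by simp

lemma mode_truncation: "\<exists>N. \<forall>m\<ge>N. Y u m x = 0"
  using voa by (simp add: is_VOA_def)

lemma creation: "m \<ge> 0 \<Longrightarrow> Y u m vac = 0" and creation_minus1: "Y u (-1) vac = u"
  using voa by (simp_all add: is_VOA_def)

lemma jacobi_identity:
  "(\<forall>i\<ge>N. Y u (r + int i) v = 0 \<and> Y v (q + int i) w = 0 \<and> Y u (p + int i) w = 0) \<Longrightarrow>
     (\<Sum>i<N. scale (of_int p gchoose i) (Y (Y u (r + int i) v) (p + q - int i) w))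
   = (\<Sum>i<N. scale ((-1)^i * (of_int r gchoose i))
        (Y u (p + r - int i) (Y v (q + int i) w)
         - scale ((-1) powi r) (Y v (q + r - int i) (Y u (p + int i) w))))"
  using voa unfolding is_VOA_def by blast

lemma virasoro: "L m (L n x) - L n (L m x)
   = scale (of_int (m - n)) (L (m + n) x) + scale (if m + n = 0 then (of_int (m^3 - m) / 12) * c else 0) x"
  using voa unfolding is_VOA_def by blast

lemma L_minus1_derivative: "Y (L (-1) u) m x = scale (- of_int m) (Y u (m - 1) x)"
  using voa unfolding is_VOA_def by blast

lemma L_add: "L n (x + y) = L n x + L n y" and L_scale: "L n (scale a x) = scale a (L n x)"
  and L_zero [simp]: "L n 0 = 0"
  by (simp_all add: Lv_def mode_add mode_scale)

lemma L_vacuum: "n \<ge> -1 \<Longrightarrow> L n vac = 0"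
  by (simp add: Lv_def creation)

lemma L0_weight: "x \<in> V k \<Longrightarrow> L 0 x = scale (of_nat k) x"
  by (simp add: Vgr_def)

text \<open>The Jacobi identity at \<open>r = 0\<close>, where only the \<open>i = 0\<close> term survives on the right.\<close>

lemma mode_commutator:
  "Y u (int P) (Y v q w) - Y v q (Y u (int P) w)
   = (\<Sum>i\<le>P. scale (of_nat (P choose i)) (Y (Y u (int i) v) (int P + q - int i) w))"
proof -
  obtain N1 N2 N3 where N1: "\<forall>m\<ge>N1. Y u m v = 0" and N2: "\<forall>m\<ge>N2. Y v m w = 0"
    and N3: "\<forall>m\<ge>N3. Y u m w = 0"
    using mode_truncation by metis
  define N where "N = nat \<bar>N1\<bar> + nat \<bar>N2 - q\<bar> + nat \<bar>N3\<bar> + P + 1"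
  have "\<forall>i\<ge>N. Y u (0 + int i) v = 0 \<and> Y v (q + int i) w = 0 \<and> Y u (int P + int i) w = 0"
    using N1 N2 N3 unfolding N_def by auto
  note jacobi = jacobi_identity[OF this]
  have "{..<N} = insert 0 {1..<N}"
    unfolding N_def by auto
  moreover have "(0::complex) gchoose i = 0" if "i \<in> {1..<N}" for i
    using that by (cases i) (auto simp: gbinomial_0)
  ultimately have rhs: "(\<Sum>i<N. scale ((-1)^i * (of_int 0 gchoose i))
              (Y u (int P + 0 - int i) (Y v (q + int i) w)
               - scale ((-1) powi 0) (Y v (q + 0 - int i) (Y u (int P + int i) w))))
         = Y u (int P) (Y v q w) - Y v q (Y u (int P) w)"
    by (simp add: gbinomial_0)
  have "(\<Sum>i<N. scale (of_int (int P) gchoose i) (Y (Y u (0 + int i) v) (int P + q - int i) w))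
      = (\<Sum>i<N. scale (of_nat (P choose i)) (Y (Y u (int i) v) (int P + q - int i) w))"
    by (simp add: binomial_gbinomial[symmetric])
  also have "\<dots> = (\<Sum>i\<le>P. scale (of_nat (P choose i)) (Y (Y u (int i) v) (int P + q - int i) w))"
    by (rule sum.mono_neutral_right) (auto simp: N_def)
  finally show ?thesis
    using jacobi rhs by simp
qed

lemma L_minus1_commutator: "L (-1) (Y v q w) = Y v q (L (-1) w) + scale (- of_int q) (Y v (q - 1) w)"
proof -
  have "L (-1) (Y v q w) - Y v q (L (-1) w) = Y (L (-1) v) q w"
    using mode_commutator[of om 0 v q w] by (simp add: Lv_def)
  then show ?thesis
    by (simp add: L_minus1_derivative algebra_simps)
qed

lemma L0_commutator:
  assumes "v \<in> V k"
  shows "L 0 (Y v q w) = Y v q (L 0 w) + scale (of_nat k - of_int q - 1) (Y v q w)"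
proof -
  have "L 0 (Y v q w) - Y v q (L 0 w) = Y (L (-1) v) (1 + q) w + Y (L 0 v) q w"
    using mode_commutator[of om 1 v q w] by (simp add: Lv_def)
  also have "\<dots> = scale (of_nat k - of_int q - 1) (Y v q w)"
    by (simp add: L_minus1_derivative L0_weight[OF assms] mode_scale_left scale_left_distrib[symmetric]
        algebra_simps)
  finally show ?thesis
    by (simp add: algebra_simps)
qed

lemma L1_commutator:
  assumes "v \<in> V k"
  shows "L 1 (Y v q w) = Y v q (L 1 w) + scale (2 * of_nat k - of_int q - 2) (Y v (q + 1) w) + Y (L 1 v) q w"
proof -
  have "L 1 (Y v q w) - Y v q (L 1 w)
      = Y (L (-1) v) (2 + q) w + scale 2 (Y (L 0 v) (1 + q) w) + Y (L 1 v) q w"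
    using mode_commutator[of om 2 v q w] by (simp add: Lv_def numeral_2_eq_2)
  also have "\<dots> = scale (2 * of_nat k - of_int q - 2) (Y v (q + 1) w) + Y (L 1 v) q w"
    by (simp add: L_minus1_derivative L0_weight[OF assms] mode_scale_left scale_left_distrib[symmetric]
        add.commute)
  finally show ?thesis
    by (simp add: algebra_simps)
qed

lemma conformal_vector_eq: "om = L (-2) vac"
  by (simp add: Lv_def creation_minus1)

lemma L1_conformal_vector: "L 1 om = 0"
  using virasoro[of 1 "-2" vac] by (simp add: L_vacuum conformal_vector_eq[symmetric])

lemma conformal_vector_weight: "om \<in> V 2"
  using virasoro[of 0 "-2" vac] by (simp add: Vgr_def L_vacuum conformal_vector_eq[symmetric])

lemma L_minus1_raises_weight: "x \<in> V k \<Longrightarrow> L (-1) x \<in> V (Suc k)"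
  using virasoro[of 0 "-1" x]
  by (simp add: Vgr_def L_add L_scale scale_left_distrib algebra_simps)

lemma L1_lowers_weight: "x \<in> V (Suc k) \<Longrightarrow> L 1 x \<in> V k"
  using virasoro[of 0 1 x]
  by (simp add: Vgr_def L_add L_scale scale_left_distrib algebra_simps)

end

section \<open>Genus zero Ward identities\<close>

locale voa_with_invariant_form = vertex_operator_algebra scale Y vac om c
  for scale :: "complex \<Rightarrow> 'v::ab_group_add \<Rightarrow> 'v" and Y vac om c +
  fixes B :: "'v \<Rightarrow> 'v \<Rightarrow> complex"
  assumes form: "invariant_form scale Y om B"
begin

lemma linear_form_left: "module_hom scale (*) (\<lambda>x. B x y)"
  and linear_form_right: "module_hom scale (*) (B x)"
  using form by (simp_all add: module_hom_iff_additive_homogeneous invariant_form_def bilinear_form_def)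

lemmas form_add_right = module_hom.add[OF linear_form_right]
  and form_scale_right = module_hom.scale[OF linear_form_right]
  and form_sum_right = module_hom.sum[OF linear_form_right]
  and form_zero_left [simp] = module_hom.zero[OF linear_form_left]
  and form_zero_right [simp] = module_hom.zero[OF linear_form_right]

lemma form_invariance:
  "u \<in> V k \<Longrightarrow> B (Y u m a) b
     = (-1)^k * (\<Sum>j\<le>k. (1 / fact j) * B a (Y ((L 1 ^^ j) u) (2 * int k - m - int j - 2) b))"
  using form by (simp add: invariant_form_def)

text \<open>Invariance for the weight-two, \<open>L(1)\<close>-primitive vector \<open>\<omega>\<close>.\<close>

lemma L_adjoint: "B (L n a) b = B a (L (-n) b)"
proof -
  have "B (Y om (n + 1) a) b
      = (\<Sum>j\<le>2. (1 / fact j) * B a (Y ((L 1 ^^ j) om) (2 * 2 - (n + 1) - int j - 2) b))"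
    using form_invariance[OF conformal_vector_weight, of "n + 1" a b] by simp
  also have "\<dots> = B a (Y om (1 - n) b)"
    by (simp add: numeral_2_eq_2 L1_conformal_vector)
  finally show ?thesis
    by (simp add: Lv_def)
qed

lemma vacuum_form_L: "n \<in> {-1, 0, 1} \<Longrightarrow> B vac (L n x) = 0"
  using L_adjoint[of n vac x] L_adjoint[of "-n" vac x] L_vacuum[of "-n"] by auto

definition mode_op :: "'v \<times> int \<Rightarrow> 'v \<Rightarrow> 'v" where
  "mode_op = (\<lambda>(u, e) x. Y u (- e - 1) x)"

lemma mode_op_apply [simp]: "mode_op (u, e) x = Y u (- e - 1) x"
  by (simp add: mode_op_def)

lemma Z0_foldr: "Z0 Y B vac us es = B vac (foldr mode_op (zip us es) vac)"
  by (simp add: Z0_def mode_op_def)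

lemma additive_mode_op: "additive (mode_op p)"
  by unfold_locales (cases p, simp add: mode_add)

lemma foldr_mode_op_add: "foldr mode_op ps (x + y) = foldr mode_op ps x + foldr mode_op ps y"
  by (rule additive.add[OF additive_foldr[OF additive_mode_op]])

lemma foldr_mode_op_zero [simp]: "foldr mode_op ps 0 = 0"
  by (rule additive.zero[OF additive_foldr[OF additive_mode_op]])

lemma foldr_mode_op_scale: "foldr mode_op ps (scale a x) = scale a (foldr mode_op ps x)"
  by (induction ps) (auto simp: mode_scale)

lemma Z0_update_conv_foldr:
  assumes "i < length us" "length us = length es"
  shows "B vac (foldr mode_op (take i (zip us es)) (mode_op (u, e) (foldr mode_op (drop (Suc i) (zip us es)) vac)))
       = Z0 Y B vac (us[i := u]) (es[i := e])"
  using assms by (simp add: Z0_foldr zip_update[symmetric] upd_conv_take_nth_drop take_zip drop_zip)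

lemma ward_identity:
  assumes "\<And>i x. i < length ps \<Longrightarrow> A (mode_op (ps ! i) x) = mode_op (ps ! i) (A x) + H i x"
    and "A vac = 0" and "\<And>x. B vac (A x) = 0"
  shows "(\<Sum>i<length ps. B vac (foldr mode_op (take i ps) (H i (foldr mode_op (drop (Suc i) ps) vac)))) = 0"
  using foldr_commutator[where F = mode_op, OF additive_mode_op assms(1), of vac] assms(2) assms(3)[of "foldr mode_op ps vac"]
  by (simp add: form_sum_right)

lemma Z0_ward_L_minus1:
  assumes "length us = length es"
  shows "(\<Sum>i<length us. of_int (es ! i + 1) * Z0 Y B vac us (es[i := es ! i + 1])) = 0"
proof -
  let ?ps = "zip us es"
  define H where "H i x = scale (of_int (es ! i + 1)) (mode_op (us ! i, es ! i + 1) x)" for i x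
  have "L (-1) (mode_op (?ps ! i) x) = mode_op (?ps ! i) (L (-1) x) + H i x" if "i < length ?ps" for i x
    using that by (simp add: H_def L_minus1_commutator algebra_simps)
  then have "(\<Sum>i<length ?ps. B vac (foldr mode_op (take i ?ps) (H i (foldr mode_op (drop (Suc i) ?ps) vac)))) = 0"
    by (rule ward_identity) (simp_all add: L_vacuum vacuum_form_L)
  moreover have "B vac (foldr mode_op (take i ?ps) (H i (foldr mode_op (drop (Suc i) ?ps) vac)))
      = of_int (es ! i + 1) * Z0 Y B vac us (es[i := es ! i + 1])" if "i < length us" for i
    using Z0_update_conv_foldr[OF that assms, of "us ! i" "es ! i + 1"]
    by (simp add: H_def foldr_mode_op_scale form_scale_right)
  ultimately show ?thesis
    using assms by simp
qed

lemma Z0_ward_L0: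
  assumes "length us = length es" and weights: "\<And>i. i < length us \<Longrightarrow> us ! i \<in> V (ks ! i)"
  shows "(\<Sum>i<length us. (of_nat (ks ! i) + of_int (es ! i)) * Z0 Y B vac us es) = 0"
proof -
  let ?ps = "zip us es"
  define H where "H i x = scale (of_nat (ks ! i) + of_int (es ! i)) (mode_op (us ! i, es ! i) x)" for i x
  have "L 0 (mode_op (?ps ! i) x) = mode_op (?ps ! i) (L 0 x) + H i x" if "i < length ?ps" for i x
    using that weights[of i] by (simp add: H_def L0_commutator algebra_simps)
  then have "(\<Sum>i<length ?ps. B vac (foldr mode_op (take i ?ps) (H i (foldr mode_op (drop (Suc i) ?ps) vac)))) = 0"
    by (rule ward_identity) (simp_all add: L_vacuum vacuum_form_L)
  moreover have "B vac (foldr mode_op (take i ?ps) (H i (foldr mode_op (drop (Suc i) ?ps) vac)))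
      = (of_nat (ks ! i) + of_int (es ! i)) * Z0 Y B vac us es" if "i < length us" for i
    using Z0_update_conv_foldr[OF that assms(1), of "us ! i" "es ! i"]
    by (simp add: H_def foldr_mode_op_scale form_scale_right)
  ultimately show ?thesis
    using assms by simp
qed

lemma Z0_ward_L1:
  assumes "length us = length es" and weights: "\<And>i. i < length us \<Longrightarrow> us ! i \<in> V (ks ! i)"
  shows "(\<Sum>i<length us. (2 * of_nat (ks ! i) + of_int (es ! i) - 1) * Z0 Y B vac us (es[i := es ! i - 1])
            + Z0 Y B vac (us[i := L 1 (us ! i)]) es) = 0"
proof -
  let ?ps = "zip us es"
  define H where "H i x = scale (2 * of_nat (ks ! i) + of_int (es ! i) - 1) (mode_op (us ! i, es ! i - 1) x)
      + mode_op (L 1 (us ! i), es ! i) x" for i x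
  have "L 1 (mode_op (?ps ! i) x) = mode_op (?ps ! i) (L 1 x) + H i x" if "i < length ?ps" for i x
    using that weights[of i] by (simp add: H_def L1_commutator algebra_simps)
  then have "(\<Sum>i<length ?ps. B vac (foldr mode_op (take i ?ps) (H i (foldr mode_op (drop (Suc i) ?ps) vac)))) = 0"
    by (rule ward_identity) (simp_all add: L_vacuum vacuum_form_L)
  moreover have "B vac (foldr mode_op (take i ?ps) (H i (foldr mode_op (drop (Suc i) ?ps) vac)))
      = (2 * of_nat (ks ! i) + of_int (es ! i) - 1) * Z0 Y B vac us (es[i := es ! i - 1])
          + Z0 Y B vac (us[i := L 1 (us ! i)]) es" if "i < length us" for i
    using Z0_update_conv_foldr[OF that assms(1), of "us ! i" "es ! i - 1"]
      Z0_update_conv_foldr[OF that assms(1), of "L 1 (us ! i)" "es ! i"]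
    by (simp add: H_def foldr_mode_op_add foldr_mode_op_scale form_add_right form_scale_right)
  ultimately show ?thesis
    using assms by simp
qed

lemma Z0_linear_slot:
  assumes "p < length us" "length us = length es"
  shows "module_hom scale (*) (\<lambda>x. Z0 Y B vac (us[p := x]) es)"
  using Z0_update_conv_foldr[OF assms, of _ "es ! p", symmetric]
  by (simp add: module_hom_iff_additive_homogeneous mode_add_left mode_scale_left foldr_mode_op_add
      foldr_mode_op_scale form_add_right form_scale_right)

lemma Z0_linear_two_slots:
  assumes "p < length us" "q < length us" "p \<noteq> q" "length us = length es"
  shows "module_hom scale (*) (\<lambda>a. Z0 Y B vac (us[p := a, q := b]) es)"
    and "module_hom scale (*) (\<lambda>b. Z0 Y B vac (us[p := a, q := b]) es)"
  using Z0_linear_slot[of p "us[q := b]" es] Z0_linear_slot[of q "us[p := a]" es] assms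
  by (simp_all add: list_update_swap)

lemma Z0_L_minus1_slot:
  assumes "p < length us" "length us = length es"
  shows "Z0 Y B vac (us[p := L (-1) x]) es = of_int (es ! p + 1) * Z0 Y B vac (us[p := x]) (es[p := es ! p + 1])"
proof -
  have "mode_op (L (-1) x, es ! p) y = scale (of_int (es ! p + 1)) (mode_op (x, es ! p + 1) y)" for y
    by (simp add: L_minus1_derivative diff_diff_eq)
  then show ?thesis
    using Z0_update_conv_foldr[OF assms, of "L (-1) x" "es ! p"] Z0_update_conv_foldr[OF assms, of x "es ! p + 1"]
    by (simp only: foldr_mode_op_scale form_scale_right list_update_id)
qed

end

section \<open>Sewing\<close>

locale voa_with_dual_bases = voa_with_invariant_form scale Y vac om c B
  for scale :: "complex \<Rightarrow> 'v::ab_group_add \<Rightarrow> 'v" and Y vac om c B +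
  fixes bas dual :: "nat \<Rightarrow> 'v list"
  assumes cft: "strong_CFT_type scale Y vac om"
    and bases: "hom_dual_bases scale Y om B bas dual"
begin

lemma distinct_basis: "distinct (bas n)"
  and span_basis: "V n \<subseteq> span (set (bas n))"
  and length_dual: "length (dual n) = length (bas n)"
  and basis_dual_pairing:
    "i < length (bas n) \<Longrightarrow> j < length (bas n) \<Longrightarrow> B (bas n ! i) (dual n ! j) = (if i = j then 1 else 0)"
  using bases unfolding hom_dual_bases_def by auto

lemma basis_weight: "t < length (bas n) \<Longrightarrow> bas n ! t \<in> V n"
  and dual_weight: "t < length (bas n) \<Longrightarrow> dual n ! t \<in> V n"
  using bases nth_mem unfolding hom_dual_bases_def by (metis subsetD)+

lemma basis_expansion: "x \<in> V n \<Longrightarrow> x = (\<Sum>t<length (bas n). scale (B x (dual n ! t)) (bas n ! t))"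
  using distinct_basis span_basis basis_dual_pairing linear_form_left
  by (intro biorthogonal_expansion) auto

lemma dual_basis_expansion:
  assumes "x \<in> V n"
  shows "x = (\<Sum>t<length (bas n). scale (B (bas n ! t) x) (dual n ! t))"
proof -
  have "V n \<subseteq> span (set (dual n))"
    by (rule biorthogonal_span[where Bf = B,
          OF distinct_basis span_basis _ length_dual basis_dual_pairing linear_form_right])
      (use bases in \<open>auto simp: hom_dual_bases_def\<close>)
  then have "x = (\<Sum>t<length (dual n). scale (B (bas n ! t) x) (dual n ! t))"
    using assms biorthogonal_distinct[OF length_dual basis_dual_pairing] basis_dual_pairing
      linear_form_right length_dual
    by (intro biorthogonal_expansion[where Bf = "\<lambda>a b. B b a"]) auto
  then show ?thesis
    by (simp add: length_dual)
qed

lemma L1_weight_zero: "x \<in> V 0 \<Longrightarrow> L 1 x = 0"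
  using cft by (auto simp: strong_CFT_type_def L_scale L_vacuum)

lemma L1_transfer_to_dual:
  assumes "\<And>b. module_hom scale (*) (\<lambda>a. Q a b)" "\<And>a. module_hom scale (*) (Q a)"
  shows "(\<Sum>t<length (bas (Suc k)). Q (dual (Suc k) ! t) (L 1 (bas (Suc k) ! t)))
       = (\<Sum>s<length (bas k). Q (L (-1) (dual k ! s)) (bas k ! s))"
  by (rule biorthogonal_transfer[where Bf = B and e = "bas (Suc k)" and f = "dual (Suc k)"
        and e' = "bas k" and f' = "dual k" and P = "L 1" and P' = "L (-1)",
        OF basis_expansion[OF L1_lowers_weight[OF basis_weight]]
          dual_basis_expansion[OF L_minus1_raises_weight[OF dual_weight]] _ assms])
    (simp_all add: L_adjoint[of 1])

lemma L1_transfer_to_basis: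
  assumes "\<And>b. module_hom scale (*) (\<lambda>a. Q a b)" "\<And>a. module_hom scale (*) (Q a)"
  shows "(\<Sum>t<length (bas (Suc k)). Q (L 1 (dual (Suc k) ! t)) (bas (Suc k) ! t))
       = (\<Sum>s<length (bas k). Q (dual k ! s) (L (-1) (bas k ! s)))"
  using biorthogonal_transfer[where Bf = "\<lambda>a b. B b a" and Q = "\<lambda>a b. Q b a"
      and e = "dual (Suc k)" and f = "bas (Suc k)" and e' = "dual k" and f' = "bas k"
      and P = "L 1" and P' = "L (-1)"]
    dual_basis_expansion[OF L1_lowers_weight[OF dual_weight]]
    basis_expansion[OF L_minus1_raises_weight[OF basis_weight]] assms
  by (simp add: length_dual L_adjoint[of "-1", simplified, symmetric])

definition handle_vectors :: "nat \<Rightarrow> nat list \<Rightarrow> nat list \<Rightarrow> 'v list" where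
  "handle_vectors g ks js = concat (map (\<lambda>i. [dual (ks ! i) ! (js ! i), bas (ks ! i) ! (js ! i)]) [0..<g])"

definition basis_choices :: "nat \<Rightarrow> nat list \<Rightarrow> nat list set" where
  "basis_choices g ks = listset (map (\<lambda>i. {..<length (bas (ks ! i))}) [0..<g])"

text \<open>Choices for all handles but the \<open>i\<close>-th, whose entry is normalised to \<open>0\<close>.\<close>

definition basis_choices_but :: "nat \<Rightarrow> nat list \<Rightarrow> nat \<Rightarrow> nat list set" where
  "basis_choices_but g ks i = {js. length js = g \<and> js ! i = 0 \<and> (\<forall>l<g. l \<noteq> i \<longrightarrow> js ! l < length (bas (ks ! l)))}"

lemma Zg_eq_sum_basis_choices:
  "Zg Y B vac bas dual g vs ey ew ks
     = (\<Sum>js\<in>basis_choices g ks. Z0 Y B vac (vs @ handle_vectors g ks js) (ey @ ew))"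
  by (simp add: Zg_def handle_vectors_def basis_choices_def)

lemma mem_basis_choices: "js \<in> basis_choices g ks \<longleftrightarrow> length js = g \<and> (\<forall>i<g. js ! i < length (bas (ks ! i)))"
  by (simp add: basis_choices_def mem_listset_iff)

lemma length_handle_vectors [simp]: "length (handle_vectors g ks js) = 2 * g"
  by (induction g) (auto simp: handle_vectors_def)

lemma nth_handle_vectors:
  "j < 2 * g \<Longrightarrow> handle_vectors g ks js ! j
     = (if even j then dual (ks ! (j div 2)) ! (js ! (j div 2)) else bas (ks ! (j div 2)) ! (js ! (j div 2)))"
proof (induction g)
  case (Suc g)
  have "handle_vectors (Suc g) ks js = handle_vectors g ks js @ [dual (ks ! g) ! (js ! g), bas (ks ! g) ! (js ! g)]"
    by (simp add: handle_vectors_def)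
  moreover have "j < 2 * g \<or> j = 2 * g \<or> j = 2 * g + 1"
    using Suc.prems by auto
  ultimately show ?case
    using Suc.IH by (auto simp: nth_append)
qed simp

lemma handle_vectors_weight:
  "js \<in> basis_choices g ks \<Longrightarrow> j < 2 * g \<Longrightarrow> handle_vectors g ks js ! j \<in> V (ks ! (j div 2))"
  by (auto simp: nth_handle_vectors mem_basis_choices basis_weight dual_weight)

lemma handle_vectors_update:
  assumes "i < g" "length r = g" "length ks = g"
  shows "handle_vectors g (ks[i := k]) (r[i := t]) = (handle_vectors g ks r)[2 * i := dual k ! t, 2 * i + 1 := bas k ! t]"
proof (rule nth_equalityI)
  fix j assume "j < length (handle_vectors g (ks[i := k]) (r[i := t]))"
  then have "j < 2 * g" by simp
  moreover have "j div 2 = i \<longleftrightarrow> j = 2 * i \<or> j = 2 * i + 1"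
    by auto
  ultimately show "handle_vectors g (ks[i := k]) (r[i := t]) ! j
      = (handle_vectors g ks r)[2 * i := dual k ! t, 2 * i + 1 := bas k ! t] ! j"
    using assms by (auto simp: nth_handle_vectors nth_list_update)
qed simp

lemma basis_choices_but_update: "i < g \<Longrightarrow> basis_choices_but g (ks[i := k]) i = basis_choices_but g ks i"
  unfolding basis_choices_but_def by (rule Collect_cong) (auto simp: nth_list_update)

lemma sum_basis_choices_split:
  assumes "i < g" "length ks = g"
  shows "(\<Sum>js\<in>basis_choices g ks. f js) = (\<Sum>r\<in>basis_choices_but g ks i. \<Sum>t<length (bas (ks ! i)). f (r[i := t]))"
proof -
  have "bij_betw (\<lambda>(r, t). r[i := t]) (basis_choices_but g ks i \<times> {..<length (bas (ks ! i))}) (basis_choices g ks)"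
    by (rule bij_betw_byWitness[where f' = "\<lambda>js. (js[i := 0], js ! i)"])
      (use assms in \<open>auto simp: basis_choices_but_def mem_basis_choices nth_list_update list_update_same_conv\<close>)
  then show ?thesis
    by (simp add: sum.cartesian_product sum.reindex_bij_betw[symmetric] case_prod_unfold)
qed

lemma append_handle_vectors_update:
  assumes "i < g" "length ks = g" "r \<in> basis_choices_but g ks i" "length vs = n"
  shows "vs @ handle_vectors g (ks[i := k]) (r[i := t])
       = (vs @ handle_vectors g ks r)[n + 2 * i := dual k ! t, n + 2 * i + 1 := bas k ! t]"
  using assms handle_vectors_update[OF assms(1) _ assms(2)]
  by (simp add: basis_choices_but_def list_update_append)

lemma handle_L1_weight_zero:
  assumes "length vs = n" "length ey = n" "length ew = 2 * g" "p < 2 * g" "ks ! (p div 2) = 0"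
  shows "(\<Sum>js\<in>basis_choices g ks. Z0 Y B vac ((vs @ handle_vectors g ks js)[n + p :=
            L 1 ((vs @ handle_vectors g ks js) ! (n + p))]) (ey @ ew)) = 0"
proof (rule sum.neutral, rule ballI)
  fix js assume "js \<in> basis_choices g ks"
  then have "L 1 ((vs @ handle_vectors g ks js) ! (n + p)) = 0"
    using assms handle_vectors_weight[of js g ks p] by (simp add: nth_append L1_weight_zero)
  then show "Z0 Y B vac ((vs @ handle_vectors g ks js)[n + p := L 1 ((vs @ handle_vectors g ks js) ! (n + p))])
      (ey @ ew) = 0"
    using module_hom.zero[OF Z0_linear_slot[of "n + p" "vs @ handle_vectors g ks js" "ey @ ew"]] assms
    by simp
qed

lemma rhomul_dw_Zg:
  assumes "length vs = n" "length ey = n" "length ew = 2 * g" "length ks = g"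
    and "p < 2 * g" "p div 2 = i" "ks ! i = Suc k"
  shows "rhomul i (dw p (Zg Y B vac bas dual g vs)) ey ew ks
    = (\<Sum>r\<in>basis_choices_but g ks i. \<Sum>s<length (bas k).
        Z0 Y B vac ((vs @ handle_vectors g (ks[i := k]) (r[i := s]))[n + p :=
          L (-1) ((vs @ handle_vectors g (ks[i := k]) (r[i := s])) ! (n + p))]) (ey @ ew))"
proof -
  have i: "i < g" "ks[i := k] ! i = k"
    using assms by auto
  have "rhomul i (dw p (Zg Y B vac bas dual g vs)) ey ew ks
      = of_int (ew ! p + 1) * (\<Sum>js\<in>basis_choices g (ks[i := k]).
          Z0 Y B vac (vs @ handle_vectors g (ks[i := k]) js) (ey @ ew[p := ew ! p + 1]))"
    using assms by (simp add: rhomul_def dw_def Zg_eq_sum_basis_choices)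
  also have "\<dots> = (\<Sum>r\<in>basis_choices_but g ks i. \<Sum>s<length (bas k). of_int (ew ! p + 1) *
          Z0 Y B vac (vs @ handle_vectors g (ks[i := k]) (r[i := s])) (ey @ ew[p := ew ! p + 1]))"
    using assms sum_basis_choices_split[of i g "ks[i := k]"]
    by (simp add: i basis_choices_but_update sum_distrib_left)
  also have "\<dots> = (\<Sum>r\<in>basis_choices_but g ks i. \<Sum>s<length (bas k).
        Z0 Y B vac ((vs @ handle_vectors g (ks[i := k]) (r[i := s]))[n + p :=
          L (-1) ((vs @ handle_vectors g (ks[i := k]) (r[i := s])) ! (n + p))]) (ey @ ew))"
    using assms Z0_L_minus1_slot[of "n + p" "vs @ handle_vectors g (ks[i := k]) _" "ey @ ew"]
    by (simp add: nth_append list_update_append)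
  finally show ?thesis .
qed

lemma handle_L1_dual_slot:
  assumes "length vs = n" "length ey = n" "length ew = 2 * g" "length ks = g" "i < g" "ks ! i = Suc k"
  shows "(\<Sum>js\<in>basis_choices g ks. Z0 Y B vac ((vs @ handle_vectors g ks js)[n + 2 * i :=
            L 1 ((vs @ handle_vectors g ks js) ! (n + 2 * i))]) (ey @ ew))
       = rhomul i (dw (2 * i + 1) (Zg Y B vac bas dual g vs)) ey ew ks"
proof -
  define Q where "Q r a b = Z0 Y B vac ((vs @ handle_vectors g ks r)[n + 2 * i := a, n + 2 * i + 1 := b]) (ey @ ew)"
    for r a b
  have Q_linear: "module_hom scale (*) (\<lambda>a. Q r a b)" "module_hom scale (*) (Q r a)" for r a b
    unfolding Q_def using assms by (auto intro: Z0_linear_two_slots)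
  have update: "vs @ handle_vectors g (ks[i := k']) (r[i := t])
      = (vs @ handle_vectors g ks r)[n + 2 * i := dual k' ! t, n + 2 * i + 1 := bas k' ! t]"
    if "r \<in> basis_choices_but g ks i" for r k' t
    by (rule append_handle_vectors_update) (use assms that in auto)
  have ks: "ks[i := Suc k] = ks"
    using assms by (metis list_update_id)
  have "(\<Sum>js\<in>basis_choices g ks. Z0 Y B vac ((vs @ handle_vectors g ks js)[n + 2 * i :=
            L 1 ((vs @ handle_vectors g ks js) ! (n + 2 * i))]) (ey @ ew))
      = (\<Sum>r\<in>basis_choices_but g ks i. \<Sum>t<length (bas (Suc k)).
           Q r (L 1 (dual (Suc k) ! t)) (bas (Suc k) ! t))"
    unfolding sum_basis_choices_split[OF \<open>i < g\<close> \<open>length ks = g\<close>]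
    unfolding \<open>ks ! i = Suc k\<close>
  proof (intro sum.cong refl)
    fix r t assume "r \<in> basis_choices_but g ks i"
    then show "Z0 Y B vac ((vs @ handle_vectors g ks (r[i := t]))[n + 2 * i :=
        L 1 ((vs @ handle_vectors g ks (r[i := t])) ! (n + 2 * i))]) (ey @ ew)
      = Q r (L 1 (dual (Suc k) ! t)) (bas (Suc k) ! t)"
      using assms update[of r "Suc k" t] by (simp add: ks Q_def nth_list_update list_update_overwrite_swap)
  qed
  also have "\<dots> = (\<Sum>r\<in>basis_choices_but g ks i. \<Sum>s<length (bas k). Q r (dual k ! s) (L (-1) (bas k ! s)))"
    by (intro sum.cong refl L1_transfer_to_basis Q_linear)
  also have "\<dots> = rhomul i (dw (2 * i + 1) (Zg Y B vac bas dual g vs)) ey ew ks"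
    using assms by (simp add: rhomul_dw_Zg update Q_def nth_list_update cong: sum.cong)
  finally show ?thesis .
qed

lemma handle_L1_basis_slot:
  assumes "length vs = n" "length ey = n" "length ew = 2 * g" "length ks = g" "i < g" "ks ! i = Suc k"
  shows "(\<Sum>js\<in>basis_choices g ks. Z0 Y B vac ((vs @ handle_vectors g ks js)[n + (2 * i + 1) :=
            L 1 ((vs @ handle_vectors g ks js) ! (n + (2 * i + 1)))]) (ey @ ew))
       = rhomul i (dw (2 * i) (Zg Y B vac bas dual g vs)) ey ew ks"
proof -
  define Q where "Q r a b = Z0 Y B vac ((vs @ handle_vectors g ks r)[n + 2 * i := a, n + 2 * i + 1 := b]) (ey @ ew)"
    for r a b
  have Q_linear: "module_hom scale (*) (\<lambda>a. Q r a b)" "module_hom scale (*) (Q r a)" for r a b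
    unfolding Q_def using assms by (auto intro: Z0_linear_two_slots)
  have update: "vs @ handle_vectors g (ks[i := k']) (r[i := t])
      = (vs @ handle_vectors g ks r)[n + 2 * i := dual k' ! t, n + 2 * i + 1 := bas k' ! t]"
    if "r \<in> basis_choices_but g ks i" for r k' t
    by (rule append_handle_vectors_update) (use assms that in auto)
  have ks: "ks[i := Suc k] = ks"
    using assms by (metis list_update_id)
  have "(\<Sum>js\<in>basis_choices g ks. Z0 Y B vac ((vs @ handle_vectors g ks js)[n + (2 * i + 1) :=
            L 1 ((vs @ handle_vectors g ks js) ! (n + (2 * i + 1)))]) (ey @ ew))
      = (\<Sum>r\<in>basis_choices_but g ks i. \<Sum>t<length (bas (Suc k)).
           Q r (dual (Suc k) ! t) (L 1 (bas (Suc k) ! t)))"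
    unfolding sum_basis_choices_split[OF \<open>i < g\<close> \<open>length ks = g\<close>]
    unfolding \<open>ks ! i = Suc k\<close>
  proof (intro sum.cong refl)
    fix r t assume "r \<in> basis_choices_but g ks i"
    then show "Z0 Y B vac ((vs @ handle_vectors g ks (r[i := t]))[n + (2 * i + 1) :=
        L 1 ((vs @ handle_vectors g ks (r[i := t])) ! (n + (2 * i + 1)))]) (ey @ ew)
      = Q r (dual (Suc k) ! t) (L 1 (bas (Suc k) ! t))"
      using assms update[of r "Suc k" t] by (simp add: ks Q_def nth_list_update)
  qed
  also have "\<dots> = (\<Sum>r\<in>basis_choices_but g ks i. \<Sum>s<length (bas k). Q r (L (-1) (dual k ! s)) (bas k ! s))"
    by (intro sum.cong refl L1_transfer_to_dual Q_linear)
  also have "\<dots> = rhomul i (dw (2 * i) (Zg Y B vac bas dual g vs)) ey ew ks"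
    using assms
    by (simp add: rhomul_dw_Zg update Q_def nth_list_update list_update_overwrite_swap cong: sum.cong)
  finally show ?thesis .
qed

lemma sewn_vectors_weight:
  assumes "js \<in> basis_choices g ks" "length vs = n" "length wts = n" "\<forall>k<n. vs ! k \<in> V (wts ! k)"
    and "i < length (vs @ handle_vectors g ks js)"
  shows "(vs @ handle_vectors g ks js) ! i \<in> V ((wts @ map (\<lambda>j. ks ! (j div 2)) [0..<2 * g]) ! i)"
proof (cases "i < n")
  case False
  then have "i - n < 2 * g"
    using assms by simp
  then show ?thesis
    using False assms handle_vectors_weight[OF assms(1)] by (simp add: nth_append)
qed (use assms in \<open>simp add: nth_append\<close>)

lemma sewn_ward_L_minus1:
  assumes "length vs = n" "length ey = n" "length ew = 2 * g"
  shows "(\<Sum>k<n. of_int (ey ! k + 1) * Z0 Y B vac (vs @ handle_vectors g ks js) (ey[k := ey ! k + 1] @ ew))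
       + (\<Sum>j<2 * g. of_int (ew ! j + 1) * Z0 Y B vac (vs @ handle_vectors g ks js) (ey @ ew[j := ew ! j + 1])) = 0"
proof -
  have length: "length (vs @ handle_vectors g ks js) = n + 2 * g" "length (vs @ handle_vectors g ks js) = length (ey @ ew)"
    using assms by simp_all
  show ?thesis
    using Z0_ward_L_minus1[OF length(2), unfolded length(1) sum_lessThan_add_nat] assms
    by (simp add: nth_append list_update_append)
qed

lemma sewn_ward_L0:
  assumes "js \<in> basis_choices g ks" "length vs = n" "length ey = n" "length ew = 2 * g" "length wts = n"
    and "\<forall>k<n. vs ! k \<in> V (wts ! k)"
  shows "((\<Sum>k<n. of_nat (wts ! k) + of_int (ey ! k)) + (\<Sum>j<2 * g. of_nat (ks ! (j div 2)) + of_int (ew ! j)))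
          * Z0 Y B vac (vs @ handle_vectors g ks js) (ey @ ew) = 0"
proof -
  have length: "length (vs @ handle_vectors g ks js) = n + 2 * g" "length (vs @ handle_vectors g ks js) = length (ey @ ew)"
    using assms by simp_all
  show ?thesis
    using Z0_ward_L0[OF length(2) sewn_vectors_weight[OF assms(1,2,5,6)], unfolded length(1) sum_lessThan_add_nat] assms
    by (simp add: nth_append sum_distrib_right distrib_right del: mult_eq_0_iff)
qed

lemma sewn_ward_L1:
  assumes "js \<in> basis_choices g ks" "length vs = n" "length ey = n" "length ew = 2 * g" "length wts = n"
    and "\<forall>k<n. vs ! k \<in> V (wts ! k)"
  shows "(\<Sum>k<n. (2 * of_nat (wts ! k) + of_int (ey ! k) - 1)
              * Z0 Y B vac (vs @ handle_vectors g ks js) (ey[k := ey ! k - 1] @ ew)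
            + Z0 Y B vac (vs[k := L 1 (vs ! k)] @ handle_vectors g ks js) (ey @ ew))
       + (\<Sum>j<2 * g. (2 * of_nat (ks ! (j div 2)) + of_int (ew ! j) - 1)
              * Z0 Y B vac (vs @ handle_vectors g ks js) (ey @ ew[j := ew ! j - 1])
            + Z0 Y B vac ((vs @ handle_vectors g ks js)[n + j := L 1 ((vs @ handle_vectors g ks js) ! (n + j))])
                (ey @ ew)) = 0"
proof -
  have length: "length (vs @ handle_vectors g ks js) = n + 2 * g" "length (vs @ handle_vectors g ks js) = length (ey @ ew)"
    using assms by simp_all
  show ?thesis
    using Z0_ward_L1[OF length(2) sewn_vectors_weight[OF assms(1,2,5,6)], unfolded length(1) sum_lessThan_add_nat] assms
    by (simp add: nth_append list_update_append)
qed

lemma Zg_ward_L_minus1: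
  assumes "length vs = n" "length ey = n" "length ew = 2 * g"
  shows "Lm1 g (Zg Y B vac bas dual g vs) ey ew ks - (\<Sum>k<n. dy k (Zg Y B vac bas dual g vs) ey ew ks) = 0"
proof -
  let ?Z = "Zg Y B vac bas dual g vs" and ?J = "basis_choices g ks"
  have "(\<Sum>k<n. dy k ?Z ey ew ks) + (\<Sum>j<2 * g. dw j ?Z ey ew ks)
      = (\<Sum>js\<in>?J. (\<Sum>k<n. of_int (ey ! k + 1) * Z0 Y B vac (vs @ handle_vectors g ks js) (ey[k := ey ! k + 1] @ ew))
          + (\<Sum>j<2 * g. of_int (ew ! j + 1) * Z0 Y B vac (vs @ handle_vectors g ks js) (ey @ ew[j := ew ! j + 1])))"
    by (simp add: dy_def dw_def Zg_eq_sum_basis_choices sum_distrib_left sum.distrib sum.swap[of _ ?J])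
  also have "\<dots> = 0"
    using sewn_ward_L_minus1[OF assms] by simp
  finally show ?thesis
    by (simp add: Lm1_def add_eq_0_iff)
qed

lemma Zg_ward_L0:
  assumes "length vs = n" "length ey = n" "length ew = 2 * g" "length wts = n" "\<forall>k<n. vs ! k \<in> V (wts ! k)"
  shows "L0op g (Zg Y B vac bas dual g vs) ey ew ks - (\<Sum>k<n. ydy k (Zg Y B vac bas dual g vs) ey ew ks)
           - (\<Sum>k<n. of_nat (wts ! k)) * Zg Y B vac bas dual g vs ey ew ks = 0"
proof -
  let ?Z = "Zg Y B vac bas dual g vs ey ew ks"
  define C :: complex
    where "C = (\<Sum>k<n. of_nat (wts ! k) + of_int (ey ! k)) + (\<Sum>j<2 * g. of_nat (ks ! (j div 2)) + of_int (ew ! j))"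
  have "C * ?Z = 0"
    unfolding Zg_eq_sum_basis_choices sum_distrib_left
    by (rule sum.neutral) (use sewn_ward_L0[OF _ assms(1-4)] assms(5) in \<open>simp add: C_def\<close>)
  moreover have "(\<Sum>j<2 * g. of_nat (ks ! (j div 2)) :: complex) = 2 * (\<Sum>i<g. of_nat (ks ! i))"
    by (simp add: sum_lessThan_double sum_distrib_left)
  then have "L0op g (Zg Y B vac bas dual g vs) ey ew ks - (\<Sum>k<n. ydy k (Zg Y B vac bas dual g vs) ey ew ks)
      - (\<Sum>k<n. of_nat (wts ! k)) * ?Z = - (C * ?Z)"
    by (simp add: L0op_def wdw_def rhodrho_def ydy_def C_def sum.distrib sum_distrib_right[symmetric] algebra_simps)
  ultimately show ?thesis
    by simp
qed

lemma handle_L1_terms: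
  assumes "length vs = n" "length ey = n" "length ew = 2 * g" "length ks = g" "i < g"
  defines "T j \<equiv> \<Sum>js\<in>basis_choices g ks. Z0 Y B vac ((vs @ handle_vectors g ks js)[n + j :=
      L 1 ((vs @ handle_vectors g ks js) ! (n + j))]) (ey @ ew)"
  shows "T (2 * i) + T (2 * i + 1) = rhomul i (dw (2 * i) (Zg Y B vac bas dual g vs)) ey ew ks
           + rhomul i (dw (2 * i + 1) (Zg Y B vac bas dual g vs)) ey ew ks"
proof (cases "ks ! i")
  case 0
  then have "T (2 * i) = 0" "T (2 * i + 1) = 0"
    unfolding T_def using assms handle_L1_weight_zero[OF assms(1-3), of "2 * i" ks]
      handle_L1_weight_zero[OF assms(1-3), of "2 * i + 1" ks] by simp_all
  then show ?thesis
    using 0 by (simp add: rhomul_def)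
next
  case (Suc k)
  then show ?thesis
    unfolding T_def using handle_L1_dual_slot[OF assms(1-5)] handle_L1_basis_slot[OF assms(1-5)] by simp
qed

lemma Zg_ward_L1:
  assumes "length vs = n" "length ey = n" "length ew = 2 * g" "length ks = g" "length wts = n"
    and "\<forall>k<n. vs ! k \<in> V (wts ! k)"
  shows "L1op g (Zg Y B vac bas dual g vs) ey ew ks - (\<Sum>k<n. y2dy k (Zg Y B vac bas dual g vs) ey ew ks)
           - (\<Sum>k<n. 2 * of_nat (wts ! k) * ymul k (Zg Y B vac bas dual g vs) ey ew ks)
         = (\<Sum>k<n. Zg Y B vac bas dual g (vs[k := L 1 (vs ! k)]) ey ew ks)"
proof -
  let ?Z = "Zg Y B vac bas dual g vs" and ?J = "basis_choices g ks"
  define T where "T j = (\<Sum>js\<in>?J. Z0 Y B vac ((vs @ handle_vectors g ks js)[n + j :=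
      L 1 ((vs @ handle_vectors g ks js) ! (n + j))]) (ey @ ew))" for j
  have y_terms: "(\<Sum>k<n. y2dy k ?Z ey ew ks + 2 * of_nat (wts ! k) * ymul k ?Z ey ew ks
        + Zg Y B vac bas dual g (vs[k := L 1 (vs ! k)]) ey ew ks)
      = (\<Sum>js\<in>?J. \<Sum>k<n. (2 * of_nat (wts ! k) + of_int (ey ! k) - 1)
              * Z0 Y B vac (vs @ handle_vectors g ks js) (ey[k := ey ! k - 1] @ ew)
            + Z0 Y B vac (vs[k := L 1 (vs ! k)] @ handle_vectors g ks js) (ey @ ew))"
    by (simp add: y2dy_def ymul_def Zg_eq_sum_basis_choices sum_distrib_left sum.distrib sum_subtractf
        sum.swap[of _ ?J] algebra_simps)
  have w_terms: "(\<Sum>j<2 * g. w2dw j ?Z ey ew ks + 2 * of_nat (ks ! (j div 2)) * ?Z ey (ew[j := ew ! j - 1]) ks + T j)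
      = (\<Sum>js\<in>?J. \<Sum>j<2 * g. (2 * of_nat (ks ! (j div 2)) + of_int (ew ! j) - 1)
              * Z0 Y B vac (vs @ handle_vectors g ks js) (ey @ ew[j := ew ! j - 1])
            + Z0 Y B vac ((vs @ handle_vectors g ks js)[n + j := L 1 ((vs @ handle_vectors g ks js) ! (n + j))])
                (ey @ ew))"
    by (simp add: w2dw_def T_def Zg_eq_sum_basis_choices sum_distrib_left sum.distrib sum_subtractf
        sum.swap[of _ ?J] algebra_simps)
  have "(\<Sum>k<n. y2dy k ?Z ey ew ks + 2 * of_nat (wts ! k) * ymul k ?Z ey ew ks
        + Zg Y B vac bas dual g (vs[k := L 1 (vs ! k)]) ey ew ks)
      + (\<Sum>j<2 * g. w2dw j ?Z ey ew ks + 2 * of_nat (ks ! (j div 2)) * ?Z ey (ew[j := ew ! j - 1]) ks + T j) = 0"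
    unfolding y_terms w_terms sum.distrib[symmetric]
    by (rule sum.neutral) (use sewn_ward_L1[OF _ assms(1-3,5,6)] in blast)
  moreover have "(\<Sum>j<2 * g. T j) = (\<Sum>j<2 * g. rhomul (j div 2) (dw j ?Z) ey ew ks)"
    using handle_L1_terms[OF assms(1-4), folded T_def] by (simp add: sum_lessThan_double add.commute)
  moreover have "(\<Sum>j<2 * g. 2 * of_nat (ks ! (j div 2)) * ?Z ey (ew[j := ew ! j - 1]) ks)
      = 2 * (\<Sum>i<g. wmul (2 * i) (rhodrho i ?Z) ey ew ks + wmul (2 * i + 1) (rhodrho i ?Z) ey ew ks)"
    unfolding sum_lessThan_double by (simp add: sum_distrib_left wmul_def rhodrho_def algebra_simps)
  ultimately show ?thesis
    by (simp add: L1op_def sum.distrib neg_eq_iff_add_eq_0 algebra_simps)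
qed

end

theorem mainTheorem7:
  fixes scale :: "complex \<Rightarrow> 'v::ab_group_add \<Rightarrow> 'v"
    and Y :: "'v \<Rightarrow> int \<Rightarrow> 'v \<Rightarrow> 'v"
    and vac om :: 'v and c :: complex
    and B :: "'v \<Rightarrow> 'v \<Rightarrow> complex"
    and bas dual :: "nat \<Rightarrow> 'v list"
    and g n :: nat and vs :: "'v list" and wts :: "nat list"
  assumes voa: "is_VOA scale Y vac om c"
    and cft: "strong_CFT_type scale Y vac om"
    and simple: "simple_VOA scale Y"
    and sd: "self_dual scale Y om"
    and form: "invariant_form scale Y om B" and norm: "B vac vac = 1"
    and bases: "hom_dual_bases scale Y om B bas dual"
    and g1: "g \<ge> 1"
    and lens: "length vs = n" "length wts = n"
    and hom: "\<forall>k<n. vs ! k \<in> Vgr scale Y om (wts ! k)"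
  shows "\<forall>ey ew ks. length ey = n \<and> length ew = 2 * g \<and> length ks = g \<longrightarrow>
     (let Z = Zg Y B vac bas dual g vs in
        Lm1 g Z ey ew ks - (\<Sum>k<n. dy k Z ey ew ks) = 0
      \<and> L0op g Z ey ew ks - (\<Sum>k<n. ydy k Z ey ew ks) - (\<Sum>k<n. of_nat (wts ! k)) * Z ey ew ks = 0
      \<and> L1op g Z ey ew ks - (\<Sum>k<n. y2dy k Z ey ew ks)
          - (\<Sum>k<n. 2 * of_nat (wts ! k) * ymul k Z ey ew ks)
        = (\<Sum>k<n. Zg Y B vac bas dual g (vs[k := Lv Y om 1 (vs ! k)]) ey ew ks))"
proof -
  interpret voa_with_dual_bases scale Y vac om c B bas dual
    by unfold_locales (rule voa form cft bases)+
  show ?thesis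
    using Zg_ward_L_minus1[OF lens(1)] Zg_ward_L0[OF lens(1) _ _ lens(2) hom] Zg_ward_L1[OF lens(1) _ _ _ lens(2) hom]
    by (simp add: Let_def)
qed

end
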